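(* Let $s=s_1+is_2$ with $s_1>0$, $s_2\in\mathbb R$ (the same $s_1$ as in $\alpha,\beta$). Then for all $x\in\Gamma_\rho$ and $y\in\Gamma_R$, $$|\rho_s(\widetilde x,y)/s|\ge d,\qquad \operatorname{Re}[\rho_s(\widetilde x,y)]\ge\rho\,\hat\sigma(\rho)=\frac{\sigma_0 d}{m+1}.$$
   Context: Let $0<R<\rho$, $d=\rho-R$, $\Gamma_r=\{|x|=r\}$. Fix $s_1>0$, $\sigma_0>0$ and an integer $m\ge1$; let $\sigma(r)=0$ for $0\le r\le R$, $\sigma(r)=\sigma_0((r-R)/(\rho-R))^m$ for $R\le r\le\rho$, $\sigma(r)=\sigma_0$ for $r\ge\rho$; $\alpha(r)=1+s_1^{-1}\sigma(r)$; $\beta(r)=\frac1r\int_0^r\alpha(\tau)d\tau=1+s_1^{-1}\hat\sigma(r)$, with $\hat\sigma(r)=\frac1r\int_R^r\sigma(\tau)d\tau$ for $r\ge R$. The real stretched coordinates of $x\in\mathbb R^3$ are $\widetilde x=\beta(|x|)\,x$ (so $|\widetilde x|=\int_0^{|x|}\alpha$ and $\widetilde x$ has the same angular coordinates as $x$). The complex distance is $\rho_s(\widetilde x,y)=\big[s^2|\widetilde x-y|^2\big]^{1/2}$, where $z^{1/2}$ is the branch analytic on $\mathbb C\setminus(-\infty,0]$ with positive real part. *)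

theory Defs
  imports "HOL-Analysis.Analysis"
begin

definition pml_sigma :: "real \<Rightarrow> real \<Rightarrow> real \<Rightarrow> nat \<Rightarrow> real \<Rightarrow> real" where
  "pml_sigma R \<rho> \<sigma>\<^sub>0 m r =
     (if r \<le> R then 0
      else if r \<le> \<rho> then \<sigma>\<^sub>0 * ((r - R) / (\<rho> - R)) ^ m
      else \<sigma>\<^sub>0)"

definition pml_alpha :: "real \<Rightarrow> real \<Rightarrow> real \<Rightarrow> nat \<Rightarrow> real \<Rightarrow> real \<Rightarrow> real" where
  "pml_alpha R \<rho> \<sigma>\<^sub>0 m s\<^sub>1 r = 1 + pml_sigma R \<rho> \<sigma>\<^sub>0 m r / s\<^sub>1"

text \<open>beta(r) = (1/r) * integral_0^r alpha (value 1 at r = 0, the limit)\<close>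
definition pml_beta :: "real \<Rightarrow> real \<Rightarrow> real \<Rightarrow> nat \<Rightarrow> real \<Rightarrow> real \<Rightarrow> real" where
  "pml_beta R \<rho> \<sigma>\<^sub>0 m s\<^sub>1 r =
     (if r = 0 then 1 else integral {0..r} (pml_alpha R \<rho> \<sigma>\<^sub>0 m s\<^sub>1) / r)"

definition pml_sigma_hat :: "real \<Rightarrow> real \<Rightarrow> real \<Rightarrow> nat \<Rightarrow> real \<Rightarrow> real" where
  "pml_sigma_hat R \<rho> \<sigma>\<^sub>0 m r = integral {R..r} (pml_sigma R \<rho> \<sigma>\<^sub>0 m) / r"

definition stretched :: "real \<Rightarrow> real \<Rightarrow> real \<Rightarrow> nat \<Rightarrow> real \<Rightarrow> real^3 \<Rightarrow> real^3" where
  "stretched R \<rho> \<sigma>\<^sub>0 m s\<^sub>1 x = pml_beta R \<rho> \<sigma>\<^sub>0 m s\<^sub>1 (norm x) *\<^sub>R x"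

definition complex_dist :: "complex \<Rightarrow> real^3 \<Rightarrow> real^3 \<Rightarrow> complex" where
  "complex_dist s z y = csqrt (s\<^sup>2 * complex_of_real ((norm (z - y))\<^sup>2))"

end

theory Submission
  imports Defs
begin

text \<open>
  The radial stretching adds exactly the absorbed mass to the radius: on \<open>\<Gamma>\<^sub>\<rho>\<close> one has
  \<open>|x\<^sup>~| = \<rho> + c/s\<^sub>1\<close> with \<open>c = \<integral>\<^sub>R\<^sup>\<rho> \<sigma> = \<sigma>\<^sub>0 d/(m+1)\<close>, so the real distance
  \<open>D = |x\<^sup>~ - y|\<close> to a point of \<open>\<Gamma>\<^sub>R\<close> is at least \<open>d + c/s\<^sub>1\<close>. Since \<open>Re s > 0\<close>, the principal
  square root of \<open>s\<^sup>2 D\<^sup>2\<close> is \<open>s D\<close>; hence \<open>|\<rho>\<^sub>s/s| = D \<ge> d\<close> and \<open>Re \<rho>\<^sub>s = s\<^sub>1 D \<ge> s\<^sub>1 d + c \<ge> c\<close>.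
\<close>

lemma has_integral_normalized_power:
  fixes a b :: real and m :: nat
  assumes "a < b"
  shows "((\<lambda>r. ((r - a) / (b - a)) ^ m) has_integral (b - a) / (real m + 1)) {a..b}"
proof -
  define F where "F r = (b - a) / (real m + 1) * ((r - a) / (b - a)) ^ Suc m" for r
  have "((\<lambda>r. ((r - a) / (b - a)) ^ m) has_integral F b - F a) {a..b}"
  proof (rule fundamental_theorem_of_calculus)
    fix r :: real
    have "(F has_real_derivative
            (b - a) / (real m + 1) * (real (Suc m) * ((r - a) / (b - a)) ^ m * (1 / (b - a)))) (at r)"
      unfolding F_def using assms by (intro derivative_eq_intros) auto
    moreover have "(b - a) / (real m + 1) * (real (Suc m) * ((r - a) / (b - a)) ^ m * (1 / (b - a)))
                     = ((r - a) / (b - a)) ^ m"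
      using assms by (simp add: add.commute)
    ultimately show "(F has_vector_derivative ((r - a) / (b - a)) ^ m) (at r within {a..b})"
      by (simp add: has_real_derivative_iff_has_vector_derivative has_vector_derivative_at_within)
  qed (use assms in simp)
  moreover have "F b - F a = (b - a) / (real m + 1)"
    unfolding F_def using assms by simp
  ultimately show ?thesis by simp
qed

lemma pml_sigma_has_integral:
  assumes "R < \<rho>"
  shows "(pml_sigma R \<rho> \<sigma>\<^sub>0 m has_integral \<sigma>\<^sub>0 * (\<rho> - R) / (real m + 1)) {R..\<rho>}"
proof (rule has_integral_spike_finite)
  show "((\<lambda>r. \<sigma>\<^sub>0 * ((r - R) / (\<rho> - R)) ^ m) has_integral \<sigma>\<^sub>0 * (\<rho> - R) / (real m + 1)) {R..\<rho>}"
    using has_integral_mult_right[OF has_integral_normalized_power[OF assms]] by simp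
  show "pml_sigma R \<rho> \<sigma>\<^sub>0 m r = \<sigma>\<^sub>0 * ((r - R) / (\<rho> - R)) ^ m" if "r \<in> {R..\<rho>} - {R}" for r
    using that unfolding pml_sigma_def by auto
qed simp

lemma pml_sigma_hat_outer:
  assumes "R < \<rho>" "\<rho> \<noteq> 0"
  shows "\<rho> * pml_sigma_hat R \<rho> \<sigma>\<^sub>0 m \<rho> = \<sigma>\<^sub>0 * (\<rho> - R) / (real m + 1)"
  using integral_unique[OF pml_sigma_has_integral[OF assms(1)]] assms(2)
  unfolding pml_sigma_hat_def by simp

lemma pml_alpha_has_integral:
  assumes "0 \<le> R" "R < \<rho>"
  shows "(pml_alpha R \<rho> \<sigma>\<^sub>0 m s\<^sub>1 has_integral \<rho> + \<sigma>\<^sub>0 * (\<rho> - R) / (real m + 1) / s\<^sub>1) {0..\<rho>}"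
proof -
  have inner: "(pml_alpha R \<rho> \<sigma>\<^sub>0 m s\<^sub>1 has_integral R) {0..R}"
  proof (rule has_integral_eq[rotated])
    show "((\<lambda>r. 1) has_integral R) {0..R}"
      using has_integral_const_real[of "1::real" 0 R] assms by simp
  qed (auto simp: pml_alpha_def pml_sigma_def)
  have "((\<lambda>r. 1 + pml_sigma R \<rho> \<sigma>\<^sub>0 m r / s\<^sub>1)
          has_integral (\<rho> - R) + \<sigma>\<^sub>0 * (\<rho> - R) / (real m + 1) / s\<^sub>1) {R..\<rho>}"
  proof (rule has_integral_add)
    show "((\<lambda>r. 1) has_integral \<rho> - R) {R..\<rho>}"
      using has_integral_const_real[of "1::real" R \<rho>] assms by simp
    show "((\<lambda>r. pml_sigma R \<rho> \<sigma>\<^sub>0 m r / s\<^sub>1) has_integral \<sigma>\<^sub>0 * (\<rho> - R) / (real m + 1) / s\<^sub>1) {R..\<rho>}"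
      by (rule has_integral_divide) (rule pml_sigma_has_integral[OF assms(2)])
  qed
  then have outer: "(pml_alpha R \<rho> \<sigma>\<^sub>0 m s\<^sub>1
                      has_integral (\<rho> - R) + \<sigma>\<^sub>0 * (\<rho> - R) / (real m + 1) / s\<^sub>1) {R..\<rho>}"
    unfolding pml_alpha_def .
  show ?thesis
    using has_integral_combine[OF _ _ inner outer] assms by simp
qed

lemma norm_stretched_outer:
  assumes "0 \<le> R" "R < \<rho>" "0 < s\<^sub>1" "0 \<le> \<sigma>\<^sub>0" "norm x = \<rho>"
  shows "norm (stretched R \<rho> \<sigma>\<^sub>0 m s\<^sub>1 x) = \<rho> + \<sigma>\<^sub>0 * (\<rho> - R) / (real m + 1) / s\<^sub>1"
proof -
  have radius: "pml_beta R \<rho> \<sigma>\<^sub>0 m s\<^sub>1 \<rho> * \<rho> = \<rho> + \<sigma>\<^sub>0 * (\<rho> - R) / (real m + 1) / s\<^sub>1"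
    using integral_unique[OF pml_alpha_has_integral[OF assms(1,2)]] assms
    unfolding pml_beta_def by simp
  moreover have "0 \<le> \<rho> + \<sigma>\<^sub>0 * (\<rho> - R) / (real m + 1) / s\<^sub>1"
    using assms by simp
  ultimately have "0 \<le> pml_beta R \<rho> \<sigma>\<^sub>0 m s\<^sub>1 \<rho>"
    using assms(1,2) zero_le_mult_iff[of "pml_beta R \<rho> \<sigma>\<^sub>0 m s\<^sub>1 \<rho>" \<rho>] by linarith
  then show ?thesis
    using radius assms(5) unfolding stretched_def by simp
qed

lemma complex_dist_eq_mult_norm:
  assumes "0 < Re s"
  shows "complex_dist s z y = s * complex_of_real (norm (z - y))"
  unfolding complex_dist_def
proof (rule csqrt_unique)
  show "(s * complex_of_real (norm (z - y)))\<^sup>2 = s\<^sup>2 * complex_of_real ((norm (z - y))\<^sup>2)"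
    by (simp add: power_mult_distrib)
  show "0 < Re (s * complex_of_real (norm (z - y))) \<or>
        Re (s * complex_of_real (norm (z - y))) = 0 \<and> 0 \<le> Im (s * complex_of_real (norm (z - y)))"
    using assms by (cases "z = y") auto
qed

theorem lemma4p2:
  fixes R \<rho> \<sigma>\<^sub>0 s\<^sub>1 s\<^sub>2 :: real and m :: nat and x y :: "real^3"
  assumes "0 < R" "R < \<rho>" "0 < s\<^sub>1" "0 < \<sigma>\<^sub>0" "1 \<le> m"
    and "norm x = \<rho>" "norm y = R"
  shows "norm (complex_dist (Complex s\<^sub>1 s\<^sub>2) (stretched R \<rho> \<sigma>\<^sub>0 m s\<^sub>1 x) y / Complex s\<^sub>1 s\<^sub>2)
           \<ge> \<rho> - R \<and>
         Re (complex_dist (Complex s\<^sub>1 s\<^sub>2) (stretched R \<rho> \<sigma>\<^sub>0 m s\<^sub>1 x) y)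
           \<ge> \<rho> * pml_sigma_hat R \<rho> \<sigma>\<^sub>0 m \<rho> \<and>
         \<rho> * pml_sigma_hat R \<rho> \<sigma>\<^sub>0 m \<rho> = \<sigma>\<^sub>0 * (\<rho> - R) / (real m + 1)"
proof -
  define s where "s = Complex s\<^sub>1 s\<^sub>2"
  define c where "c = \<sigma>\<^sub>0 * (\<rho> - R) / (real m + 1)"
  define D where "D = norm (stretched R \<rho> \<sigma>\<^sub>0 m s\<^sub>1 x - y)"
  have c: "0 \<le> c" "\<rho> * pml_sigma_hat R \<rho> \<sigma>\<^sub>0 m \<rho> = c"
    using assms pml_sigma_hat_outer[of R \<rho>] unfolding c_def by simp_all
  have lower: "(\<rho> - R) + c / s\<^sub>1 \<le> D"
    using norm_triangle_ineq2[of "stretched R \<rho> \<sigma>\<^sub>0 m s\<^sub>1 x" y]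
      norm_stretched_outer[of R \<rho> s\<^sub>1 \<sigma>\<^sub>0 x m] assms
    unfolding D_def c_def by simp
  then have D_ge_d: "\<rho> - R \<le> D"
    using c(1) assms(3) by (smt (verit) divide_nonneg_pos)
  have "c \<le> s\<^sub>1 * (\<rho> - R) + c"
    using assms(2,3) by simp
  also have "\<dots> = s\<^sub>1 * ((\<rho> - R) + c / s\<^sub>1)"
    using assms(3) by (simp add: field_simps)
  also have "\<dots> \<le> s\<^sub>1 * D"
    using lower assms(3) by simp
  finally have Re_ge_c: "c \<le> s\<^sub>1 * D" .
  have "complex_dist s (stretched R \<rho> \<sigma>\<^sub>0 m s\<^sub>1 x) y = s * complex_of_real D"
    unfolding D_def s_def using assms(3) by (simp add: complex_dist_eq_mult_norm)
  moreover have "s \<noteq> 0" "Re s = s\<^sub>1"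
    unfolding s_def using assms(3) by (simp_all add: complex_eq_iff)
  ultimately show ?thesis
    using D_ge_d Re_ge_c c(2) assms(2) unfolding s_def[symmetric] c_def[symmetric]
    by (simp add: norm_mult)
qed

end
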